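(* Let $(r_k)_{k\in\mathbb N}$ be non-negative real numbers and let $A\in(0,1/2)$ and $B,C,D\ge0$ be constants such that for all $k$, \[r_{k+1}^2\le\Big(\big((1-A)r_k^2+B\big)^{1/2}+C\Big)^2+D.\] Then for all $k$, \[r_k\le\sqrt2\Big(1-\frac A2\Big)^k(r_0+\sqrt B)+\frac{2\sqrt2C}{A}+2\sqrt{\frac{D+B}{A}}.\] *)

theory Defs
  imports Complex_Main
begin

end

theory Submission
  imports Defs
begin

text \<open>With \<open>q = 1 - A/2\<close> and \<open>s = sqrt ((D + B) / A)\<close>, one step of the recursion maps
  any bound \<open>t \<ge> 2 s\<close> on \<open>r\<^sub>k\<close> to the bound \<open>q t + A s + C\<close> on \<open>r\<^sub>k\<^sub>+\<^sub>1\<close>: since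
  \<open>1 - A \<le> q\<^sup>2\<close>, and since \<open>q t \<ge> s\<close> makes both additive perturbations \<open>B\<close> and \<open>D\<close> at most
  \<open>2 q t \<cdot> A s / 2\<close>, each square root grows by at most \<open>A s / 2\<close>. The affine map
  \<open>t \<mapsto> q t + A s + C\<close> has fixed point \<open>2 C / A + 2 s \<ge> 2 s\<close>, which yields
  \<open>r\<^sub>k \<le> q\<^sup>k r\<^sub>0 + 2 C / A + 2 s\<close>; the stated bound is a weakening of this.\<close>

lemma sqrt_square_add_le:
  fixes a b m :: real
  assumes "0 \<le> a" "0 \<le> m" "b \<le> 2 * a * m"
  shows "sqrt (a\<^sup>2 + b) \<le> a + m"
proof -
  have "a\<^sup>2 + b \<le> (a + m)\<^sup>2"
    using assms by (simp add: power2_eq_square algebra_simps add_increasing)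
  then have "sqrt (a\<^sup>2 + b) \<le> sqrt ((a + m)\<^sup>2)"
    by (rule real_sqrt_le_mono)
  then show ?thesis
    using assms by simp
qed

lemma recursion_step_bound:
  fixes A B C D x y t :: real
  defines "s \<equiv> sqrt ((D + B) / A)"
  assumes A: "0 < A" "A \<le> 1" and B: "0 \<le> B" and C: "0 \<le> C" and D: "0 \<le> D"
    and x: "0 \<le> x" "x \<le> t" and t: "2 * s \<le> t"
    and y: "y\<^sup>2 \<le> (sqrt ((1 - A) * x\<^sup>2 + B) + C)\<^sup>2 + D"
  shows "y \<le> (1 - A/2) * t + A * s + C"
proof -
  define q where "q = 1 - A/2"
  define m where "m = A * s / 2"
  define u where "u = sqrt ((1 - A) * x\<^sup>2 + B)"
  have s: "0 \<le> s" "A * s\<^sup>2 = D + B"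
    using A B D by (simp_all add: s_def)
  have m: "0 \<le> m"
    using A s by (simp add: m_def)
  have qt: "s \<le> q * t"
  proof -
    have "s \<le> 1/2 * t" using t by simp
    also have "\<dots> \<le> q * t" using A s t by (intro mult_right_mono) (simp_all add: q_def)
    finally show ?thesis .
  qed
  have perturbation: "D + B \<le> 2 * (q * t) * m"
  proof -
    have "D + B = A * s * s" using s by (simp add: power2_eq_square)
    also have "\<dots> \<le> A * s * (q * t)" using A s qt by (intro mult_left_mono) simp_all
    finally show ?thesis by (simp add: m_def mult_ac)
  qed
  have "(1 - A) * x\<^sup>2 \<le> (1 - A) * t\<^sup>2"
    using A x by (intro mult_left_mono power_mono) simp_all
  also have "\<dots> \<le> (1 - A) * t\<^sup>2 + (A * t / 2)\<^sup>2"
    by simp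
  also have "\<dots> = (q * t)\<^sup>2"
    by (simp add: q_def power2_eq_square algebra_simps)
  finally have "u \<le> sqrt ((q * t)\<^sup>2 + B)"
    unfolding u_def by simp
  also have "\<dots> \<le> q * t + m"
    using perturbation D s qt m by (intro sqrt_square_add_le) simp_all
  finally have u: "u \<le> q * t + m" .
  have "y \<le> sqrt (y\<^sup>2)"
    by simp
  also have "\<dots> \<le> sqrt ((u + C)\<^sup>2 + D)"
    using real_sqrt_le_mono[OF y] by (simp add: u_def)
  also have "\<dots> \<le> sqrt ((q * t + m + C)\<^sup>2 + D)"
    using u C B A by (simp add: u_def power_mono)
  also have "\<dots> \<le> (q * t + m + C) + m"
  proof (rule sqrt_square_add_le)
    have "2 * (q * t) * m \<le> 2 * (q * t + m + C) * m"
      using m C by (intro mult_right_mono) simp_all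
    then show "D \<le> 2 * (q * t + m + C) * m"
      using perturbation B by linarith
  qed (use s qt m C in simp_all)
  finally show ?thesis
    by (simp add: q_def m_def)
qed

lemma recursion_bound:
  fixes r :: "nat \<Rightarrow> real" and A B C D :: real
  assumes nonneg: "\<And>k. r k \<ge> 0"
    and A: "0 < A" "A \<le> 1" and B: "B \<ge> 0" and C: "C \<ge> 0" and D: "D \<ge> 0"
    and rec: "\<And>k. (r (Suc k))\<^sup>2 \<le> (sqrt ((1 - A) * (r k)\<^sup>2 + B) + C)\<^sup>2 + D"
  shows "r k \<le> (1 - A/2)^k * r 0 + 2 * C / A + 2 * sqrt ((D + B) / A)"
proof (induction k)
  case 0
  show ?case using A B C D by simp
next
  case (Suc k)
  define s where "s = sqrt ((D + B) / A)"
  define L where "L = 2 * C / A + 2 * s"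
  have "2 * s \<le> (1 - A/2)^k * r 0 + L"
    using A C nonneg[of 0] by (simp add: L_def)
  then have "r (Suc k) \<le> (1 - A/2) * ((1 - A/2)^k * r 0 + L) + A * s + C"
    using Suc A B C D nonneg rec unfolding s_def L_def
    by (intro recursion_step_bound[where x = "r k"]) simp_all
  also have "\<dots> = (1 - A/2)^Suc k * r 0 + L"
    using A by (simp add: L_def field_simps)
  finally show ?case
    by (simp add: L_def s_def)
qed

theorem lemma11:
  fixes r :: "nat \<Rightarrow> real" and A B C D :: real
  assumes nonneg: "\<And>k. r k \<ge> 0"
    and A: "0 < A" "A < 1/2"
    and B: "B \<ge> 0" and C: "C \<ge> 0" and D: "D \<ge> 0"
    and rec: "\<And>k. (r (Suc k))^2 \<le> (sqrt ((1 - A) * (r k)^2 + B) + C)^2 + D"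
  shows "\<And>k. r k \<le> sqrt 2 * (1 - A/2)^k * (r 0 + sqrt B) + 2 * sqrt 2 * C / A
                  + 2 * sqrt ((D + B) / A)"
proof -
  fix k
  have sqrt2: "1 \<le> sqrt (2::real)"
    by simp
  have "r 0 \<le> 1 * (r 0 + sqrt B)"
    using B by simp
  also have "\<dots> \<le> sqrt 2 * (r 0 + sqrt B)"
    using B nonneg[of 0] sqrt2 by (intro mult_right_mono) simp_all
  finally have "(1 - A/2)^k * r 0 \<le> sqrt 2 * (1 - A/2)^k * (r 0 + sqrt B)"
    using A by (simp add: mult_left_mono mult.left_commute)
  moreover have "r k \<le> (1 - A/2)^k * r 0 + 2 * C / A + 2 * sqrt ((D + B) / A)"
    by (rule recursion_bound) (use nonneg A B C D rec in auto)
  moreover have "2 * C / A \<le> 2 * sqrt 2 * C / A"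
    using A C sqrt2 by (simp add: divide_right_mono mult_right_mono)
  ultimately show "r k \<le> sqrt 2 * (1 - A/2)^k * (r 0 + sqrt B) + 2 * sqrt 2 * C / A
                  + 2 * sqrt ((D + B) / A)"
    by linarith
qed

end
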